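(* Let $H(s)=\frac{B(s)}{A(s)}=K\,\frac{\prod_{i=1}^{m}(s-z_i)}{(s-p_1)(s-p_2)}$ be a real rational transfer function with $K\neq0$, denominator degree $n=2$, numerator degree $m\leq 2$, and no zero-pole cancellations. Then $H$ is externally positive if and only if $p_1,p_2\in\mathbb{R}$, $K>0$, $B(p^{\downarrow}_1)\geq 0$, $B'(p^{\downarrow}_1)\geq 0$ and $B(p^{\downarrow}_1)\geq B(p^{\downarrow}_2)$, where $B'$ is the derivative of the numerator polynomial $B$ and $p^{\downarrow}_1\geq p^{\downarrow}_2$ are the poles sorted in descending order.
   Context: A transfer function $H$ is externally positive if its inverse Laplace transform (impulse response) $h(t)=\mathfrak{L}^{-1}\{H(s)\}$ satisfies $h(t)\geq 0$ for all $t\in[0,+\infty)$ (when $m=n$, $h$ contains the term $K\delta(t)$ with $\delta(t)$ the Dirac impulse, which is required to have nonnegative weight). *)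

theory Defs
  imports "HOL-Complex_Analysis.Complex_Analysis" "HOL-Computational_Algebra.Polynomial"
begin

text \<open>Transfer function H(s) = B(s)/A(s) with real polynomials B, A (A nonzero).
  Complexified numerator and denominator.\<close>

definition cpoly :: "real poly \<Rightarrow> complex poly" where
  "cpoly P = map_poly complex_of_real P"

text \<open>Weight of the Dirac impulse in the impulse response: nonzero only when
  m = n, where it equals lim_{s -> infinity} H(s).\<close>

definition impulse_weight :: "real poly \<Rightarrow> real poly \<Rightarrow> real" where
  "impulse_weight B A = (if degree B = degree A then lead_coeff B / lead_coeff A else 0)"

text \<open>Regular (non-impulsive) part of the impulse response, i.e. the inverse Laplace
  transform of the strictly proper part of H, given by the residue (Bromwich) formula:
  h(t) = sum over the poles p of Res_{s=p} H(s) e^{st}.\<close>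

definition impulse_regular :: "real poly \<Rightarrow> real poly \<Rightarrow> real \<Rightarrow> complex" where
  "impulse_regular B A t =
     (\<Sum>p\<in>{z. poly (cpoly A) z = 0}.
        residue (\<lambda>s. poly (cpoly B) s / poly (cpoly A) s * exp (s * complex_of_real t)) p)"

definition externally_positive :: "real poly \<Rightarrow> real poly \<Rightarrow> bool" where
  "externally_positive B A \<longleftrightarrow>
     impulse_weight B A \<ge> 0 \<and>
     (\<forall>t::real. t \<ge> 0 \<longrightarrow> Im (impulse_regular B A t) = 0 \<and> Re (impulse_regular B A t) \<ge> 0)"

end

theory Submission
  imports Defs
begin

text \<open>
  The regular part of the impulse response is the sum of the residues of
  \<open>B(s) exp(s t) / ((s - p1) (s - p2))\<close>, and the impulse weight is the coefficient \<open>b2\<close>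
  of \<open>s\<^sup>2\<close> in \<open>B\<close>. As \<open>A\<close> is real, its roots are both real or a conjugate pair.
  For a pair \<open>q, cnj q\<close> the response is \<open>Im (B(q) exp(q t)) / Im q\<close>, which changes
  sign because \<open>B(q) \<noteq> 0\<close>. For real poles \<open>q1 > q2\<close> it is
  \<open>(B(q1) exp(q1 t) - B(q2) exp(q2 t)) / (q1 - q2)\<close>, nonnegative iff \<open>0 \<le> B(q1)\<close> and
  \<open>B(q2) \<le> B(q1)\<close>; for a double pole \<open>q\<close> it is \<open>(B'(q) + t B(q)) exp(q t)\<close>.
  Finally \<open>b2 \<ge> 0\<close> makes \<open>B\<close> convex, so that \<open>B'(q1) \<ge> (B(q1) - B(q2)) / (q1 - q2)\<close>,
  and together with the sign conditions it forces a positive leading coefficient.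
\<close>

lemma coeff_cpoly [simp]: "coeff (cpoly P) n = of_real (coeff P n)"
  by (simp add: cpoly_def coeff_map_poly)

lemma degree_cpoly [simp]: "degree (cpoly P) = degree P"
  by (simp add: cpoly_def degree_map_poly)

lemma poly_cpoly_of_real [simp]: "poly (cpoly P) (of_real x) = of_real (poly P x)"
  unfolding cpoly_def by (induction P) (auto simp: map_poly_pCons)

lemma poly_cpoly_cnj: "poly (cpoly P) (cnj z) = cnj (poly (cpoly P) z)"
  by (simp add: poly_cnj_real)

lemma pderiv_cpoly: "pderiv (cpoly P) = cpoly (pderiv P)"
  by (rule poly_eqI) (simp add: coeff_pderiv)

lemma poly_monic_quadratic: "poly ([:-p1, 1:] * [:-p2, 1:]) z = (z - p1) * (z - p2)"
  for p1 p2 z :: "'a :: comm_ring_1"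
  by (simp add: algebra_simps)

lemma poles_real_or_conjugate:
  assumes "cpoly A = [:-p1, 1:] * [:-p2, 1:]"
  shows "(p1 \<in> \<real> \<and> p2 \<in> \<real>) \<or> (p1 \<notin> \<real> \<and> p2 = cnj p1)"
proof -
  have root: "poly (cpoly A) z = 0 \<longleftrightarrow> z = p1 \<or> z = p2" for z
    unfolding assms poly_monic_quadratic by simp
  have "cnj p1 = p1 \<or> cnj p1 = p2" "cnj p2 = p1 \<or> cnj p2 = p2"
    using root[of "cnj p1"] root[of "cnj p2"] by (auto simp: poly_cpoly_cnj root)
  then show ?thesis
    by (metis Reals_cnj_iff complex_cnj_cnj)
qed

lemma residue_simple_pole_product:
  assumes "G holomorphic_on UNIV" "p1 \<noteq> p2"
  shows "residue (\<lambda>s. G s / ((s - p1) * (s - p2))) p1 = G p1 / (p1 - p2)"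
proof -
  have "(\<lambda>s. G s / (s - p2)) holomorphic_on - {p2}"
    by (intro holomorphic_intros holomorphic_on_subset[OF assms(1)]) auto
  then have "residue (\<lambda>s. G s / (s - p2) / (s - p1)) p1 = G p1 / (p1 - p2)"
    by (rule residue_simple[rotated 2]) (use assms(2) in auto)
  then show ?thesis
    by (simp add: mult.commute)
qed

lemma residue_double_pole:
  assumes "G holomorphic_on UNIV"
  shows "residue (\<lambda>s. G s / ((s - p) * (s - p))) p = deriv G p"
  using residue_holomorphic_over_power[OF open_UNIV UNIV_I assms, where n = 1]
  by (simp add: power2_eq_square)

lemma impulse_regular_as_residues:
  assumes "cpoly A = [:-p1, 1:] * [:-p2, 1:]"
  shows "impulse_regular B A t =
    (\<Sum>p\<in>{p1, p2}. residue (\<lambda>s. poly (cpoly B) s * exp (s * t) / ((s - p1) * (s - p2))) p)"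
proof -
  have "{z. poly (cpoly A) z = 0} = {p1, p2}"
    unfolding assms poly_monic_quadratic by auto
  then show ?thesis
    unfolding impulse_regular_def assms poly_monic_quadratic by (simp add: field_simps)
qed

lemma impulse_regular_distinct_poles:
  assumes "cpoly A = [:-p1, 1:] * [:-p2, 1:]" "p1 \<noteq> p2"
  shows "impulse_regular B A t =
    (poly (cpoly B) p1 * exp (p1 * t) - poly (cpoly B) p2 * exp (p2 * t)) / (p1 - p2)"
proof -
  define G where "G s = poly (cpoly B) s * exp (s * t)" for s
  have G: "G holomorphic_on UNIV"
    unfolding G_def by (intro holomorphic_intros)
  have "impulse_regular B A t =
      residue (\<lambda>s. G s / ((s - p1) * (s - p2))) p1 + residue (\<lambda>s. G s / ((s - p2) * (s - p1))) p2"
    using assms by (simp add: impulse_regular_as_residues G_def mult.commute)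
  also have "\<dots> = G p1 / (p1 - p2) + G p2 / (p2 - p1)"
    using assms(2) by (simp add: residue_simple_pole_product[OF G])
  also have "\<dots> = (G p1 - G p2) / (p1 - p2)"
    by (metis diff_divide_distrib divide_minus_right minus_diff_eq diff_conv_add_uminus)
  finally show ?thesis
    unfolding G_def .
qed

lemma impulse_regular_double_pole:
  assumes "cpoly A = [:-p, 1:] * [:-p, 1:]"
  shows "impulse_regular B A t = (poly (cpoly (pderiv B)) p + t * poly (cpoly B) p) * exp (p * t)"
proof -
  define G where "G s = poly (cpoly B) s * exp (s * t)" for s
  have "(G has_field_derivative (poly (cpoly (pderiv B)) p + t * poly (cpoly B) p) * exp (p * t)) (at p)"
    unfolding G_def pderiv_cpoly[symmetric]
    by (auto intro!: derivative_eq_intros simp: algebra_simps)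
  then have "deriv G p = (poly (cpoly (pderiv B)) p + t * poly (cpoly B) p) * exp (p * t)"
    by (rule DERIV_imp_deriv)
  moreover have "G holomorphic_on UNIV"
    unfolding G_def by (intro holomorphic_intros)
  ultimately show ?thesis
    using residue_double_pole[of G p] by (simp add: impulse_regular_as_residues[OF assms] G_def)
qed

lemma impulse_regular_distinct_real_poles:
  assumes "cpoly A = [:-of_real x1, 1:] * [:-of_real x2, 1:]" "x1 \<noteq> x2"
  shows "impulse_regular B A t =
    of_real ((poly B x1 * exp (x1 * t) - poly B x2 * exp (x2 * t)) / (x1 - x2))"
  using assms by (simp add: impulse_regular_distinct_poles exp_of_real[symmetric])

lemma impulse_regular_double_real_pole:
  assumes "cpoly A = [:-of_real x, 1:] * [:-of_real x, 1:]"
  shows "impulse_regular B A t = of_real ((poly (pderiv B) x + t * poly B x) * exp (x * t))"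
  using assms by (simp add: impulse_regular_double_pole exp_of_real[symmetric])

lemma impulse_regular_conjugate_poles:
  assumes "cpoly A = [:-q, 1:] * [:-cnj q, 1:]" "q \<notin> \<real>"
  shows "impulse_regular B A t = of_real (Im (poly (cpoly B) q * exp (q * t)) / Im q)"
proof -
  define w where "w = poly (cpoly B) q * exp (q * t)"
  have "Im q \<noteq> 0"
    using assms(2) complex_is_Real_iff by blast
  moreover have "q \<noteq> cnj q"
    using assms(2) Reals_cnj_iff by metis
  moreover have "poly (cpoly B) (cnj q) * exp (cnj q * t) = cnj w"
    by (simp add: w_def poly_cpoly_cnj exp_cnj)
  ultimately have "impulse_regular B A t = (w - cnj w) / (q - cnj q)"
    using assms(1) by (simp add: impulse_regular_distinct_poles w_def)
  also have "\<dots> = of_real (Im w / Im q)"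
    using \<open>Im q \<noteq> 0\<close> by (simp add: complex_diff_cnj field_simps)
  finally show ?thesis
    unfolding w_def .
qed

lemma impulse_weight_monic_quadratic:
  assumes "degree B \<le> 2" "cpoly A = [:-p1, 1:] * [:-p2, 1:]"
  shows "impulse_weight B A = coeff B 2"
proof -
  have "degree A = 2"
    using degree_cpoly[of A] assms(2) by simp
  moreover have "coeff A 2 = 1"
    using coeff_cpoly[of A 2] assms(2) by (simp add: numeral_2_eq_2)
  moreover have "degree B \<noteq> 2 \<Longrightarrow> coeff B 2 = 0"
    using assms(1) by (simp add: coeff_eq_0)
  ultimately show ?thesis
    unfolding impulse_weight_def by auto
qed

lemma degree_le_2_poly_eq:
  assumes "degree B \<le> 2"
  shows "B = [:coeff B 0, coeff B 1, coeff B 2:]"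
  using assms by (intro poly_eqI) (auto simp: coeff_pCons coeff_eq_0 numeral_2_eq_2 split: nat.split)

lemma quadratic_difference_le_pderiv:
  fixes B :: "real poly"
  assumes "degree B \<le> 2" "0 \<le> coeff B 2" "x2 \<le> x1"
  shows "poly B x1 - poly B x2 \<le> (x1 - x2) * poly (pderiv B) x1"
proof -
  have "(x1 - x2) * poly (pderiv B) x1 - (poly B x1 - poly B x2) = coeff B 2 * (x1 - x2)\<^sup>2"
    by (subst (1 2 3) degree_le_2_poly_eq[OF assms(1)])
      (simp add: pderiv_pCons algebra_simps power2_eq_square)
  also have "\<dots> \<ge> 0"
    using assms(2) by simp
  finally show ?thesis
    by simp
qed

lemma quadratic_lead_coeff_pos:
  fixes B :: "real poly"
  assumes "B \<noteq> 0" "degree B \<le> 2" "0 \<le> coeff B 2" "0 \<le> poly B x" "0 \<le> poly (pderiv B) x"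
  shows "0 < lead_coeff B"
proof -
  consider (degree_2) "degree B = 2" | (degree_1) "degree B = 1" | (degree_0) "degree B = 0"
    using assms(2) by linarith
  then have "0 \<le> lead_coeff B"
  proof cases
    case degree_2
    then show ?thesis
      using assms(3) by simp
  next
    case degree_1
    then have "pderiv B = [:lead_coeff B:]"
      by (subst degree_le_2_poly_eq) (auto simp: pderiv_pCons coeff_eq_0)
    then show ?thesis
      using assms(5) by simp
  next
    case degree_0
    then have "B = [:lead_coeff B:]"
      using degree_le_2_poly_eq[OF assms(2)] by (auto simp: coeff_eq_0)
    then show ?thesis
      using assms(4) by (metis poly_pCons poly_0 mult_zero_right add_0_right)
  qed
  then show ?thesis
    using assms(1) by (metis leading_coeff_0_iff order_le_less)
qed

lemma exp_difference_nonneg_iff: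
  fixes a b x1 x2 :: real
  assumes "x2 < x1"
  shows "(\<forall>t\<ge>0. 0 \<le> (a * exp (x1 * t) - b * exp (x2 * t)) / (x1 - x2)) \<longleftrightarrow> 0 \<le> a \<and> b \<le> a"
proof
  assume nonneg: "\<forall>t\<ge>0. 0 \<le> (a * exp (x1 * t) - b * exp (x2 * t)) / (x1 - x2)"
  then have "b \<le> a"
    using assms by (auto simp: zero_le_divide_iff dest: spec[of _ 0])
  moreover have "0 \<le> a"
  proof (rule ccontr)
    assume "\<not> 0 \<le> a"
    define t where "t = b / a / (x1 - x2)"
    have "1 \<le> b / a"
      using \<open>\<not> 0 \<le> a\<close> \<open>b \<le> a\<close> by simp
    then have "t \<ge> 0"
      using divide_nonneg_pos[of "b / a" "x1 - x2"] assms unfolding t_def by linarith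
    have "b / a < exp ((x1 - x2) * t)"
      using exp_gt_self[of "b / a"] assms by (simp add: t_def)
    then have "a * exp ((x1 - x2) * t) < b"
      using \<open>\<not> 0 \<le> a\<close> by (simp add: neg_divide_less_eq mult.commute)
    moreover have "exp ((x1 - x2) * t) * exp (x2 * t) = exp (x1 * t)"
      by (simp add: algebra_simps flip: exp_add)
    ultimately have "a * exp (x1 * t) < b * exp (x2 * t)"
      by (metis mult.assoc mult_strict_right_mono exp_gt_zero)
    then have "(a * exp (x1 * t) - b * exp (x2 * t)) / (x1 - x2) < 0"
      using assms by (simp add: divide_neg_pos)
    then show False
      using nonneg \<open>t \<ge> 0\<close> by (simp add: not_le[symmetric])
  qed
  ultimately show "0 \<le> a \<and> b \<le> a"
    by simp
next
  assume "0 \<le> a \<and> b \<le> a"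
  have "b * exp (x2 * t) \<le> a * exp (x1 * t)" if "t \<ge> 0" for t
  proof -
    have "b * exp (x2 * t) \<le> a * exp (x2 * t)"
      using \<open>0 \<le> a \<and> b \<le> a\<close> by simp
    also have "\<dots> \<le> a * exp (x1 * t)"
      using \<open>0 \<le> a \<and> b \<le> a\<close> assms that by (simp add: mult_left_mono mult_right_mono)
    finally show ?thesis .
  qed
  then show "\<forall>t\<ge>0. 0 \<le> (a * exp (x1 * t) - b * exp (x2 * t)) / (x1 - x2)"
    using assms by simp
qed

lemma linear_exp_nonneg_iff:
  fixes u v x :: real
  shows "(\<forall>t\<ge>0. 0 \<le> (u + t * v) * exp (x * t)) \<longleftrightarrow> 0 \<le> u \<and> 0 \<le> v"
proof
  assume "\<forall>t\<ge>0. 0 \<le> (u + t * v) * exp (x * t)"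
  then have nonneg: "0 \<le> u + t * v" if "t \<ge> 0" for t
    using that by (simp add: zero_le_mult_iff)
  then have "0 \<le> u"
    using nonneg[of 0] by simp
  moreover have "0 \<le> v"
  proof (rule ccontr)
    assume "\<not> 0 \<le> v"
    define t where "t = (u + 1) / - v"
    have "0 \<le> t"
      using \<open>0 \<le> u\<close> \<open>\<not> 0 \<le> v\<close> by (simp add: t_def divide_nonneg_neg)
    moreover have "u + t * v = -1"
      using \<open>\<not> 0 \<le> v\<close> by (simp add: t_def field_simps)
    ultimately show False
      using nonneg[of t] by simp
  qed
  ultimately show "0 \<le> u \<and> 0 \<le> v"
    by simp
qed simp

lemma Im_mult_exp_negative:
  fixes c q :: complex
  assumes "0 < Im q" "c \<noteq> 0"
  shows "\<exists>t\<ge>0. Im (c * exp (q * of_real t)) < 0"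
proof -
  define t where "t = (3 * pi / 2 - Arg c) / Im q"
  have "Arg c \<le> 3 * pi / 2"
    using Arg_le_pi[of c] pi_gt_zero by linarith
  then have "t \<ge> 0"
    using assms(1) by (simp add: t_def)
  have "Im (c * exp (q * of_real t)) = cmod c * Im (exp (\<i> * Arg c + q * of_real t))"
    by (subst Arg_eq[OF assms(2)]) (simp add: exp_add mult.assoc)
  also have "\<dots> = cmod c * (exp (Re q * t) * sin (3 * pi / 2))"
    using assms(1) by (simp add: Im_exp t_def)
  also have "sin (3 * pi / 2) = -1"
    using sin_periodic_pi[of "pi / 2"] by (simp add: field_simps)
  finally have "Im (c * exp (q * of_real t)) = - (cmod c * exp (Re q * t))"
    by simp
  then show ?thesis
    using \<open>t \<ge> 0\<close> assms(2) by auto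
qed

lemma externally_positive_iff_real_response:
  assumes "\<And>t. impulse_regular B A t = of_real (h t)"
  shows "externally_positive B A \<longleftrightarrow> 0 \<le> impulse_weight B A \<and> (\<forall>t\<ge>0. 0 \<le> h t)"
  unfolding externally_positive_def assms by simp

lemma not_externally_positive_conjugate_poles:
  assumes "cpoly A = [:-q, 1:] * [:-cnj q, 1:]" "q \<notin> \<real>" "poly (cpoly B) q \<noteq> 0"
  shows "\<not> externally_positive B A"
proof -
  obtain r where r: "0 < Im r" "cpoly A = [:-r, 1:] * [:-cnj r, 1:]" "poly (cpoly B) r \<noteq> 0"
  proof (cases "0 < Im q")
    case True
    then show ?thesis
      using that assms(1,3) by blast
  next
    case False
    then have "0 < Im (cnj q)"
      using assms(2) complex_is_Real_iff by force
    then show ?thesis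
      using that[of "cnj q"] assms(1,3) by (simp add: mult.commute poly_cpoly_cnj)
  qed
  obtain t where "t \<ge> 0" "Im (poly (cpoly B) r * exp (r * of_real t)) < 0"
    using Im_mult_exp_negative[OF r(1,3)] by blast
  moreover have "r \<notin> \<real>"
    using r(1) complex_is_Real_iff by force
  ultimately have "Re (impulse_regular B A t) < 0"
    using impulse_regular_conjugate_poles[OF r(2)] r(1) by (simp add: divide_neg_pos)
  then show ?thesis
    unfolding externally_positive_def using \<open>t \<ge> 0\<close> by force
qed

lemma externally_positive_real_poles_iff:
  assumes "B \<noteq> 0" "degree B \<le> 2"
    and A: "cpoly A = [:-of_real x1, 1:] * [:-of_real x2, 1:]" and "x2 \<le> x1"
  shows "externally_positive B A \<longleftrightarrow>
    0 < lead_coeff B \<and> 0 \<le> poly B x1 \<and> 0 \<le> poly (pderiv B) x1 \<and> poly B x2 \<le> poly B x1"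
proof -
  have weight: "impulse_weight B A = coeff B 2"
    using impulse_weight_monic_quadratic[OF assms(2) A] .
  have coeff_2: "0 \<le> coeff B 2" if "0 < lead_coeff B"
    using that assms(2) by (cases "degree B = 2") (auto simp: coeff_eq_0)
  show ?thesis
  proof (cases "x1 = x2")
    case True
    then have "externally_positive B A \<longleftrightarrow>
        0 \<le> coeff B 2 \<and> 0 \<le> poly (pderiv B) x1 \<and> 0 \<le> poly B x1"
      using externally_positive_iff_real_response[OF impulse_regular_double_real_pole] A
      by (simp add: weight linear_exp_nonneg_iff)
    then show ?thesis
      using True coeff_2 quadratic_lead_coeff_pos[OF assms(1,2)] by auto
  next
    case False
    then have "x2 < x1"
      using assms(4) by simp
    have "externally_positive B A \<longleftrightarrow>
        0 \<le> coeff B 2 \<and> 0 \<le> poly B x1 \<and> poly B x2 \<le> poly B x1"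
      using externally_positive_iff_real_response[OF impulse_regular_distinct_real_poles[OF A False]]
      by (simp add: weight exp_difference_nonneg_iff[OF \<open>x2 < x1\<close>])
    moreover have "0 \<le> poly (pderiv B) x1" if "0 \<le> coeff B 2" "poly B x2 \<le> poly B x1"
    proof -
      have "0 \<le> (x1 - x2) * poly (pderiv B) x1"
        using quadratic_difference_le_pderiv[OF assms(2) that(1) assms(4)] that(2) by linarith
      then show ?thesis
        using \<open>x2 < x1\<close> by (simp add: zero_le_mult_iff)
    qed
    ultimately show ?thesis
      using coeff_2 quadratic_lead_coeff_pos[OF assms(1,2)] by blast
  qed
qed

theorem proposition6:
  fixes B A :: "real poly" and p1 p2 :: complex
  assumes "B \<noteq> 0"
    and "degree B \<le> 2"
    and "cpoly A = [:-p1, 1:] * [:-p2, 1:]"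
    and "\<forall>z. poly (cpoly A) z = 0 \<longrightarrow> poly (cpoly B) z \<noteq> 0"
  shows "externally_positive B A \<longleftrightarrow>
    (p1 \<in> \<real> \<and> p2 \<in> \<real> \<and> lead_coeff B > 0 \<and>
     (let q1 = max (Re p1) (Re p2); q2 = min (Re p1) (Re p2) in
        poly B q1 \<ge> 0 \<and> poly (pderiv B) q1 \<ge> 0 \<and> poly B q1 \<ge> poly B q2))"
proof -
  consider (real) "p1 \<in> \<real>" "p2 \<in> \<real>" | (conjugate) "p1 \<notin> \<real>" "p2 = cnj p1"
    using poles_real_or_conjugate[OF assms(3)] by blast
  then show ?thesis
  proof cases
    case conjugate
    have "poly (cpoly B) p1 \<noteq> 0"
      using assms(3,4) by (simp add: poly_monic_quadratic)
    then have "\<not> externally_positive B A"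
      using not_externally_positive_conjugate_poles assms(3) conjugate by blast
    with conjugate show ?thesis
      by simp
  next
    case real
    define x1 x2 where "x1 = max (Re p1) (Re p2)" and "x2 = min (Re p1) (Re p2)"
    have "cpoly A = [:-of_real x1, 1:] * [:-of_real x2, 1:]"
      using assms(3) real by (cases "Re p1 \<le> Re p2") (auto simp: x1_def x2_def mult.commute)
    moreover have "x2 \<le> x1"
      by (simp add: x1_def x2_def)
    ultimately show ?thesis
      using externally_positive_real_poles_iff[OF assms(1,2)] real
      by (simp add: x1_def x2_def Let_def)
  qed
qed

end
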